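(* Let $\mathcal N$ be the one-layer ReLU CNN with input dimension $1\times 3\times 1$, $d_1\ge 1$ filters of dimension $1\times 2\times 1$ and stride $1$ (so the hidden layer has dimension $1\times 2\times d_1$). Then the maximal number of linear regions of $\mathcal N$ is $R_{\mathcal N}=d_1^3+d_1^2+d_1+1$.
   Context: One-layer ReLU CNN with input $X^0\in\mathbb R^{1\times 3\times 1}$, i.e. $x=(x_1,x_2,x_3)\in\mathbb R^3$, and filters $(w_{k,1},w_{k,2})$ with biases $b_k$, $1\le k\le d_1$; the neurons are the $2d_1$ pre-activations $w_{k,1}x_1+w_{k,2}x_2+b_k$ and $w_{k,1}x_2+w_{k,2}x_3+b_k$. An activation pattern assigns $\pm1$ to each neuron; its region is the set of inputs where every pre-activation times its sign is positive. $R_{\mathcal N}$ is the maximum over all parameter values of the number of activation patterns with nonempty region. *)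

theory Defs
  imports Main "HOL.Real"
begin

fun preact :: "(nat \<Rightarrow> real) \<Rightarrow> (nat \<Rightarrow> real) \<Rightarrow> (nat \<Rightarrow> real) \<Rightarrow> nat \<Rightarrow> nat
     \<Rightarrow> real \<times> real \<times> real \<Rightarrow> real" where
  "preact w1 w2 b k j (x1, x2, x3) =
     (if j = 0 then w1 k * x1 + w2 k * x2 + b k else w1 k * x2 + w2 k * x3 + b k)"

text \<open>Activation patterns: assign +1/-1 to each of the 2d neurons (k,j), k<d, j<2;
  extended by 0 outside the neuron index set so patterns are uniquely represented.\<close>
definition patterns :: "nat \<Rightarrow> (nat \<Rightarrow> nat \<Rightarrow> int) set" where
  "patterns d = {\<sigma>. \<forall>k j. (k < d \<and> j < 2 \<longrightarrow> \<sigma> k j \<in> {-1, 1})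
                          \<and> (\<not> (k < d \<and> j < 2) \<longrightarrow> \<sigma> k j = 0)}"

definition region :: "nat \<Rightarrow> (nat \<Rightarrow> real) \<Rightarrow> (nat \<Rightarrow> real) \<Rightarrow> (nat \<Rightarrow> real)
     \<Rightarrow> (nat \<Rightarrow> nat \<Rightarrow> int) \<Rightarrow> (real \<times> real \<times> real) set" where
  "region d w1 w2 b \<sigma> =
     {x. \<forall>k<d. \<forall>j<2. of_int (\<sigma> k j) * preact w1 w2 b k j x > 0}"

definition num_regions :: "nat \<Rightarrow> (nat \<Rightarrow> real) \<Rightarrow> (nat \<Rightarrow> real) \<Rightarrow> (nat \<Rightarrow> real) \<Rightarrow> nat" where
  "num_regions d w1 w2 b = card {\<sigma> \<in> patterns d. region d w1 w2 b \<sigma> \<noteq> {}}"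

definition is_max_regions :: "nat \<Rightarrow> nat \<Rightarrow> bool" where
  "is_max_regions d N \<longleftrightarrow>
     (\<exists>w1 w2 b. num_regions d w1 w2 b = N) \<and> (\<forall>w1 w2 b. num_regions d w1 w2 b \<le> N)"

end

theory Submission
  imports Defs
begin

text \<open>
  Every neuron is an affine function of the input \<open>x \<in> \<real>\<^sup>3\<close>, and the activation patterns
  with nonempty region are the sign vectors realized by this family of functions.

  Upper bound (deletion--restriction): a pattern of the other neurons that is realized on both
  sides of the zero set of a new neuron is, by interpolation, realized on that zero set. So adding
  a neuron adds at most as many patterns as the old family realizes on its zero set. The neurons
  at the first filter position only see \<open>(x\<^sub>1, x\<^sub>2)\<close>, those at the second only
  \<open>(x\<^sub>2, x\<^sub>3)\<close>. On the zero plane of a second-position neuron one of the two families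
  becomes a function of a single plane coordinate, which bounds the patterns there by
  \<open>1 + d(d+1)/2 + m(d+1)\<close> for the \<open>m\<close>-th such neuron; summing gives \<open>(d+1)(d\<^sup>2+1)\<close>.

  Lower bound: with weights \<open>(1, 2(k+1))\<close> and bias \<open>-(k+1)\<^sup>2\<close>, filter \<open>k\<close> at
  \<open>(u, v)\<close> evaluates to \<open>u + v\<^sup>2 - (k+1-v)\<^sup>2\<close>, so the active filters are those with
  \<open>k + 1\<close> in an open interval centred at \<open>v\<close>. Sharing \<open>x\<^sub>2\<close> between the two positions
  still leaves enough freedom to realize \<open>(d+1)(d\<^sup>2+1)\<close> pairs of active sets.
\<close>

section \<open>Sign patterns realized by a family of functions\<close>

definition sign_vectors :: "'i set \<Rightarrow> ('i \<Rightarrow> int) set" where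
  "sign_vectors I = {\<sigma>. (\<forall>i\<in>I. \<sigma> i = 1 \<or> \<sigma> i = -1) \<and> (\<forall>i. i \<notin> I \<longrightarrow> \<sigma> i = 0)}"

definition realized_patterns :: "'a set \<Rightarrow> 'i set \<Rightarrow> ('i \<Rightarrow> 'a \<Rightarrow> real) \<Rightarrow> ('i \<Rightarrow> int) set" where
  "realized_patterns S I f = {\<sigma> \<in> sign_vectors I. \<exists>x\<in>S. \<forall>i\<in>I. of_int (\<sigma> i) * f i x > 0}"

definition interpolating :: "'i set \<Rightarrow> ('i \<Rightarrow> 'a \<Rightarrow> real) \<Rightarrow> bool" where
  "interpolating I f \<longleftrightarrow> (\<forall>x y. \<forall>u::real. \<exists>z. \<forall>i\<in>I. f i z = (1 - u) * f i x + u * f i y)"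

lemma finite_sign_vectors: "finite I \<Longrightarrow> finite (sign_vectors I)"
proof -
  assume "finite I"
  then have "finite {\<sigma>. \<forall>i. (i \<in> I \<longrightarrow> \<sigma> i \<in> {1, -1::int}) \<and> (i \<notin> I \<longrightarrow> \<sigma> i = 0)}"
    by (intro finite_set_of_finite_funs) auto
  then show ?thesis
    by (rule finite_subset[rotated]) (auto simp: sign_vectors_def)
qed

lemma finite_realized_patterns: "finite I \<Longrightarrow> finite (realized_patterns S I f)"
  by (rule finite_subset[OF _ finite_sign_vectors]) (auto simp: realized_patterns_def)

lemma realized_patterns_subset:
  assumes "\<And>x. x \<in> S \<Longrightarrow> \<exists>y\<in>T. \<forall>i\<in>I. g i y = f i x"
  shows "realized_patterns S I f \<subseteq> realized_patterns T I g"
proof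
  fix \<sigma> assume "\<sigma> \<in> realized_patterns S I f"
  then obtain x where "\<sigma> \<in> sign_vectors I" "x \<in> S" "\<forall>i\<in>I. of_int (\<sigma> i) * f i x > 0"
    by (auto simp: realized_patterns_def)
  moreover obtain y where "y \<in> T" "\<forall>i\<in>I. g i y = f i x"
    using assms \<open>x \<in> S\<close> by blast
  ultimately show "\<sigma> \<in> realized_patterns T I g"
    unfolding realized_patterns_def by (intro CollectI conjI bexI[of _ y]) auto
qed

lemma card_realized_patterns_mono:
  assumes "finite I" "\<And>x. x \<in> S \<Longrightarrow> \<exists>y\<in>T. \<forall>i\<in>I. g i y = f i x"
  shows "card (realized_patterns S I f) \<le> card (realized_patterns T I g)"
  using assms by (intro card_mono finite_realized_patterns realized_patterns_subset)

lemma card_realized_patterns_comp: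
  assumes "finite I" "S \<subseteq> range \<psi>"
  shows "card (realized_patterns S I f) \<le> card (realized_patterns UNIV I (\<lambda>i. f i \<circ> \<psi>))"
  using assms by (intro card_realized_patterns_mono) auto

lemma card_realized_patterns_singleton:
  assumes "finite I" "S \<subseteq> {p}"
  shows "card (realized_patterns S I f) \<le> 1"
proof -
  have "\<sigma> = \<tau>" if "\<sigma> \<in> realized_patterns S I f" "\<tau> \<in> realized_patterns S I f" for \<sigma> \<tau>
  proof
    fix i
    show "\<sigma> i = \<tau> i"
    proof (cases "i \<in> I")
      case True
      then have "of_int (\<sigma> i) * f i p > 0" "of_int (\<tau> i) * f i p > 0"
        "\<sigma> i \<in> {1, -1}" "\<tau> i \<in> {1, -1}"
        using that assms(2) by (auto simp: realized_patterns_def sign_vectors_def)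
      then show ?thesis by (auto simp: zero_less_mult_iff)
    next
      case False
      then show ?thesis using that by (auto simp: realized_patterns_def sign_vectors_def)
    qed
  qed
  then show ?thesis
    by (simp add: card_le_Suc0_iff_eq[OF finite_realized_patterns[OF assms(1)]])
qed

lemma card_realized_patterns_empty_index: "card (realized_patterns S {} f) \<le> 1"
proof -
  have "realized_patterns S {} f \<subseteq> {\<lambda>_. 0}"
    by (auto simp: realized_patterns_def sign_vectors_def)
  then have "card (realized_patterns S {} f) \<le> card {\<lambda>_::'a. 0::int}"
    by (intro card_mono) simp_all
  then show ?thesis
    by simp
qed

lemma realized_patterns_insert_zero:
  "\<forall>x. f j x = 0 \<Longrightarrow> realized_patterns S (insert j I) f = {}"
  by (auto simp: realized_patterns_def)

lemma interpolating_zero_between: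
  assumes "interpolating (insert j I) f"
    and "f j x > 0" "f j y < 0"
    and "\<forall>i\<in>I. of_int (\<sigma> i) * f i x > 0" "\<forall>i\<in>I. of_int (\<sigma> i) * f i y > 0"
  obtains z where "f j z = 0" "\<forall>i\<in>I. of_int (\<sigma> i) * f i z > 0"
proof -
  define u where "u = f j x / (f j x - f j y)"
  have u: "0 < u" "u < 1"
    using assms(2,3) by (auto simp: u_def field_simps)
  obtain z where z: "\<forall>i\<in>insert j I. f i z = (1 - u) * f i x + u * f i y"
    using assms(1) unfolding interpolating_def by blast
  have "f j z = 0"
    using z assms(2,3) by (simp add: u_def field_simps)
  moreover have "of_int (\<sigma> i) * f i z > 0" if "i \<in> I" for i
  proof -
    have "of_int (\<sigma> i) * f i z
        = (1 - u) * (of_int (\<sigma> i) * f i x) + u * (of_int (\<sigma> i) * f i y)"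
      unfolding z[rule_format, OF insertI2[OF that]] by (simp add: algebra_simps)
    also have "\<dots> > 0"
    proof -
      have "0 < of_int (\<sigma> i) * f i x" "0 < of_int (\<sigma> i) * f i y"
        using assms(4,5) that by auto
      then show ?thesis
        using u by (intro add_pos_pos) (simp_all add: mult_pos_pos)
    qed
    finally show ?thesis .
  qed
  ultimately show ?thesis using that by blast
qed

lemma realized_patterns_restrict:
  assumes "\<tau> \<in> realized_patterns S (insert j I) f" "j \<notin> I"
  shows "\<tau>(j := 0) \<in> realized_patterns S I f"
  using assms by (auto simp: realized_patterns_def sign_vectors_def)

lemma inj_on_fun_upd_fixed: "inj_on (\<lambda>\<tau>. \<tau>(j := a)) {\<tau>. \<tau> j = c}"
proof (rule inj_onI)
  fix \<tau> \<tau>' assume "\<tau> \<in> {\<tau>. \<tau> j = c}" "\<tau>' \<in> {\<tau>. \<tau> j = c}" "\<tau>(j := a) = \<tau>'(j := a)"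
  then have "(\<tau>(j := a))(j := c) = (\<tau>'(j := a))(j := c)" "\<tau> j = c" "\<tau>' j = c"
    by simp_all
  then show "\<tau> = \<tau>'"
    by (metis fun_upd_triv fun_upd_upd)
qed

lemma realized_patterns_restrict_zero_set:
  assumes "interpolating (insert j I) f" "j \<notin> I"
    and "\<tau> \<in> realized_patterns UNIV (insert j I) f" "\<tau> j = 1"
    and "\<tau>' \<in> realized_patterns UNIV (insert j I) f" "\<tau>' j = -1"
    and "\<tau>(j := 0) = \<tau>'(j := 0)"
  shows "\<tau>(j := 0) \<in> realized_patterns {x. f j x = 0} I f"
proof -
  obtain x y where x: "\<forall>i\<in>insert j I. of_int (\<tau> i) * f i x > 0"
    and y: "\<forall>i\<in>insert j I. of_int (\<tau>' i) * f i y > 0"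
    using assms(3,5) by (auto simp: realized_patterns_def)
  have "\<tau>' i = \<tau> i" if "i \<in> I" for i
    using that assms(2,7) by (metis fun_upd_other)
  moreover have "f j x > 0" "f j y < 0"
    using x y assms(4,6) by auto
  ultimately obtain z where "f j z = 0" "\<forall>i\<in>I. of_int (\<tau> i) * f i z > 0"
    using interpolating_zero_between[OF assms(1), of x y \<tau>] x y by auto
  then show ?thesis
    using realized_patterns_restrict[OF assms(3,2)] assms(2)
    by (auto simp: realized_patterns_def)
qed

lemma card_realized_patterns_insert:
  assumes "finite I" "j \<notin> I" "interpolating (insert j I) f"
  shows "card (realized_patterns UNIV (insert j I) f)
           \<le> card (realized_patterns UNIV I f) + card (realized_patterns {x. f j x = 0} I f)"
proof -
  let ?R = "realized_patterns UNIV (insert j I) f"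
  let ?restrict = "\<lambda>\<tau>::'a \<Rightarrow> int. \<tau>(j := 0)"
  define P where "P = {\<tau> \<in> ?R. \<tau> j = 1}"
  define M where "M = {\<tau> \<in> ?R. \<tau> j = -1}"
  have "finite ?R"
    using assms(1) by (simp add: finite_realized_patterns)
  then have fin: "finite P" "finite M"
    unfolding P_def M_def by (auto intro: rev_finite_subset)
  have "?R = P \<union> M" "P \<inter> M = {}"
    by (auto simp: P_def M_def realized_patterns_def sign_vectors_def)
  then have "card ?R = card P + card M"
    using fin by (simp add: card_Un_disjoint)
  also have "\<dots> = card (?restrict ` P) + card (?restrict ` M)"
  proof -
    have "inj_on ?restrict P"
      by (rule inj_on_subset[OF inj_on_fun_upd_fixed[where c = 1]]) (auto simp: P_def)
    moreover have "inj_on ?restrict M"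
      by (rule inj_on_subset[OF inj_on_fun_upd_fixed[where c = "-1"]]) (auto simp: M_def)
    ultimately show ?thesis
      by (simp add: card_image)
  qed
  also have "\<dots> = card (?restrict ` P \<union> ?restrict ` M) + card (?restrict ` P \<inter> ?restrict ` M)"
    using fin by (intro card_Un_Int) auto
  also have "\<dots> \<le> card (realized_patterns UNIV I f) + card (realized_patterns {x. f j x = 0} I f)"
  proof (intro add_mono card_mono finite_realized_patterns assms(1))
    show "?restrict ` P \<union> ?restrict ` M \<subseteq> realized_patterns UNIV I f"
      using assms(2) by (auto simp: P_def M_def intro: realized_patterns_restrict)
    show "?restrict ` P \<inter> ?restrict ` M \<subseteq> realized_patterns {x. f j x = 0} I f"
      using assms(2,3) by (auto simp: P_def M_def intro: realized_patterns_restrict_zero_set)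
  qed
  finally show ?thesis .
qed

section \<open>Affine functions on the line and the plane\<close>

definition affine1 :: "(real \<Rightarrow> real) \<Rightarrow> bool" where
  "affine1 g \<longleftrightarrow> (\<exists>a c. \<forall>x. g x = a * x + c)"

definition affine2 :: "(real \<times> real \<Rightarrow> real) \<Rightarrow> bool" where
  "affine2 g \<longleftrightarrow> (\<exists>a b c. \<forall>x y. g (x, y) = a * x + b * y + c)"

definition affine2_snd :: "(real \<times> real \<Rightarrow> real) \<Rightarrow> bool" where
  "affine2_snd g \<longleftrightarrow> (\<exists>b c. \<forall>x y. g (x, y) = b * y + c)"

lemma affine2_snd_imp_affine2: "affine2_snd g \<Longrightarrow> affine2 g"
  unfolding affine2_snd_def affine2_def by (metis mult_zero_left add_0)

lemma affine1_comp_line: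
  assumes "affine2 h"
  shows "affine1 (h \<circ> (\<lambda>t. (p + v * t, q + w * t)))"
proof -
  obtain a b c where "\<forall>x y. h (x, y) = a * x + b * y + c"
    using assms unfolding affine2_def by blast
  then have "\<forall>t. (h \<circ> (\<lambda>t. (p + v * t, q + w * t))) t = (a * v + b * w) * t + (a * p + b * q + c)"
    by (simp add: algebra_simps)
  then show ?thesis
    unfolding affine1_def by blast
qed

lemma interpolating_affine1:
  assumes "\<forall>i\<in>I. affine1 (f i)"
  shows "interpolating I f"
  unfolding interpolating_def
proof (intro allI exI ballI)
  fix x y u :: real and i assume "i \<in> I"
  then obtain a c where "\<forall>x. f i x = a * x + c"
    using assms unfolding affine1_def by blast
  then show "f i ((1 - u) * x + u * y) = (1 - u) * f i x + u * f i y"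
    by (simp add: algebra_simps)
qed

lemma interpolating_affine2:
  assumes "\<forall>i\<in>I. affine2 (f i)"
  shows "interpolating I f"
  unfolding interpolating_def
proof (intro allI exI ballI)
  fix x y :: "real \<times> real" and u :: real and i assume "i \<in> I"
  then obtain a b c where "\<forall>x y. f i (x, y) = a * x + b * y + c"
    using assms unfolding affine2_def by blast
  then show "f i ((1 - u) * fst x + u * fst y, (1 - u) * snd x + u * snd y)
      = (1 - u) * f i x + u * f i y"
    by (cases x, cases y) (simp add: algebra_simps)
qed

lemma affine1_zero_set:
  assumes "affine1 g" "\<exists>x. g x \<noteq> 0"
  shows "\<exists>p. {x. g x = 0} \<subseteq> {p}"
proof -
  obtain a c where g: "\<forall>x. g x = a * x + c"
    using assms(1) unfolding affine1_def by blast
  have "{x. g x = 0} \<subseteq> {- c / a}"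
    using g assms(2) by (cases "a = 0") (auto simp: field_simps)
  then show ?thesis by blast
qed

lemma affine2_zero_set:
  assumes "affine2 g" "\<exists>z. g z \<noteq> 0"
  shows "\<exists>p q v w. {z. g z = 0} \<subseteq> range (\<lambda>t. (p + v * t, q + w * t))"
proof -
  obtain a b c where g: "\<forall>x y. g (x, y) = a * x + b * y + c"
    using assms(1) unfolding affine2_def by blast
  consider "b \<noteq> 0" | "b = 0" "a \<noteq> 0" | "a = 0" "b = 0"
    by blast
  then show ?thesis
  proof cases
    case 1
    have "{z. g z = 0} \<subseteq> range (\<lambda>t. (0 + 1 * t, - c / b + (- a / b) * t))"
    proof
      fix z assume "z \<in> {z. g z = 0}"
      with 1 g show "z \<in> range (\<lambda>t. (0 + 1 * t, - c / b + (- a / b) * t))"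
        by (intro range_eqI[of _ _ "fst z"]) (cases z, simp add: field_simps)
    qed
    then show ?thesis by blast
  next
    case 2
    have "{z. g z = 0} \<subseteq> range (\<lambda>t. (- c / a + 0 * t, 0 + 1 * t))"
    proof
      fix z assume "z \<in> {z. g z = 0}"
      with 2 g show "z \<in> range (\<lambda>t. (- c / a + 0 * t, 0 + 1 * t))"
        by (intro range_eqI[of _ _ "snd z"]) (cases z, simp add: field_simps)
    qed
    then show ?thesis by blast
  next
    case 3
    then have "{z. g z = 0} = {}"
      using g assms(2) by auto
    then show ?thesis by blast
  qed
qed

lemma card_realized_patterns_affine1:
  assumes "finite I" "\<forall>i\<in>I. affine1 (f i)"
  shows "card (realized_patterns UNIV I f) \<le> card I + 1"
  using assms
proof (induction I rule: finite_induct)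
  case empty
  then show ?case using card_realized_patterns_empty_index by simp
next
  case (insert j I)
  have IH: "card (realized_patterns UNIV I f) \<le> card I + 1"
    using insert.IH insert.prems by simp
  have deletion: "card (realized_patterns UNIV (insert j I) f)
      \<le> card (realized_patterns UNIV I f) + card (realized_patterns {x. f j x = 0} I f)"
    using insert.hyps insert.prems by (intro card_realized_patterns_insert interpolating_affine1)
  show ?case
  proof (cases "\<exists>x. f j x \<noteq> 0")
    case True
    then obtain p where "{x. f j x = 0} \<subseteq> {p}"
      using affine1_zero_set[of "f j"] insert.prems by auto
    then have "card (realized_patterns {x. f j x = 0} I f) \<le> 1"
      by (rule card_realized_patterns_singleton[OF insert.hyps(1)])
    then show ?thesis
      using deletion IH insert.hyps by simp
  next
    case False
    then show ?thesis by (simp add: realized_patterns_insert_zero)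
  qed
qed

lemma card_realized_patterns_affine2_snd:
  assumes "finite H" "\<forall>i\<in>H. affine2_snd (f i)"
  shows "card (realized_patterns UNIV H f) \<le> card H + 1"
proof -
  have coeffs: "\<exists>b c. \<forall>x y. f i (x, y) = b * y + c" if "i \<in> H" for i
    using assms(2) that unfolding affine2_snd_def by blast
  have "card (realized_patterns UNIV H f) \<le> card (realized_patterns UNIV H (\<lambda>i t. f i (0, t)))"
  proof (rule card_realized_patterns_mono[OF assms(1)])
    fix z :: "real \<times> real"
    have "f i (0, snd z) = f i z" if "i \<in> H" for i
      using coeffs[OF that] by (cases z) auto
    then show "\<exists>t\<in>UNIV. \<forall>i\<in>H. f i (0, t) = f i z"
      by blast
  qed
  also have "\<dots> \<le> card H + 1"
  proof (intro card_realized_patterns_affine1[OF assms(1)] ballI)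
    fix i assume "i \<in> H"
    then show "affine1 (\<lambda>t. f i (0, t))"
      using coeffs unfolding affine1_def by fastforce
  qed
  finally show ?thesis .
qed

lemma card_realized_patterns_affine2:
  assumes "finite G" "finite H" "G \<inter> H = {}"
    and "\<forall>i\<in>G. affine2 (f i)" "\<forall>i\<in>H. affine2_snd (f i)"
  shows "2 * card (realized_patterns UNIV (G \<union> H) f)
           \<le> 2 + card G * (card G + 1) + 2 * card H * (card G + 1)"
  using assms(1,3,4)
proof (induction G rule: finite_induct)
  case empty
  then show ?case using card_realized_patterns_affine2_snd[OF assms(2,5)] by simp
next
  case (insert g G)
  let ?I = "G \<union> H"
  have fin: "finite ?I" and "g \<notin> ?I" and "card ?I \<le> card G + card H"
    using insert.hyps insert.prems assms(2) by (auto simp: card_Un_le)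
  have affine: "\<forall>i\<in>insert g ?I. affine2 (f i)"
    using insert.prems assms(5) affine2_snd_imp_affine2 by blast
  have IH: "2 * card (realized_patterns UNIV ?I f) \<le> 2 + card G * (card G + 1) + 2 * card H * (card G + 1)"
    using insert.IH insert.prems by blast
  have deletion: "card (realized_patterns UNIV (insert g ?I) f)
      \<le> card (realized_patterns UNIV ?I f) + card (realized_patterns {z. f g z = 0} ?I f)"
    using fin \<open>g \<notin> ?I\<close> affine by (intro card_realized_patterns_insert interpolating_affine2)
  show ?case
  proof (cases "\<exists>z. f g z \<noteq> 0")
    case True
    moreover have "affine2 (f g)"
      using affine by simp
    ultimately obtain p q v w where line: "{z. f g z = 0} \<subseteq> range (\<lambda>t. (p + v * t, q + w * t))"
      using affine2_zero_set by blast
    have "card (realized_patterns {z. f g z = 0} ?I f)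
        \<le> card (realized_patterns UNIV ?I (\<lambda>i. f i \<circ> (\<lambda>t. (p + v * t, q + w * t))))"
      by (rule card_realized_patterns_comp[OF fin line])
    also have "\<dots> \<le> card ?I + 1"
      using fin affine by (intro card_realized_patterns_affine1 ballI affine1_comp_line) auto
    finally show ?thesis
      using deletion IH insert.hyps \<open>card ?I \<le> _\<close> by (simp add: algebra_simps)
  next
    case False
    then show ?thesis by (simp add: realized_patterns_insert_zero)
  qed
qed

section \<open>Affine functions of \<open>(x, y)\<close> and of \<open>(y, z)\<close> in space\<close>

definition affine_xy :: "(real \<times> real \<times> real \<Rightarrow> real) \<Rightarrow> bool" where
  "affine_xy g \<longleftrightarrow> (\<exists>a b c. \<forall>x y z. g (x, y, z) = a * x + b * y + c)"

definition affine_yz :: "(real \<times> real \<times> real \<Rightarrow> real) \<Rightarrow> bool" where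
  "affine_yz g \<longleftrightarrow> (\<exists>a b c. \<forall>x y z. g (x, y, z) = a * y + b * z + c)"

lemma interpolating_affine_xy_yz:
  assumes "\<forall>i\<in>I. affine_xy (f i) \<or> affine_yz (f i)"
  shows "interpolating I f"
  unfolding interpolating_def
proof (intro allI exI ballI)
  fix p q :: "real \<times> real \<times> real" and u :: real and i assume "i \<in> I"
  then obtain a b c where "(\<forall>x y z. f i (x, y, z) = a * x + b * y + c)
      \<or> (\<forall>x y z. f i (x, y, z) = a * y + b * z + c)"
    using assms unfolding affine_xy_def affine_yz_def by blast
  then show "f i ((1 - u) * fst p + u * fst q, (1 - u) * fst (snd p) + u * fst (snd q),
      (1 - u) * snd (snd p) + u * snd (snd q)) = (1 - u) * f i p + u * f i q"
    by (cases p rule: prod_cases3, cases q rule: prod_cases3) (auto simp: algebra_simps)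
qed

lemma affine_xy_comp_graph: "affine_xy h \<Longrightarrow> affine2 (h \<circ> (\<lambda>(s, t). (s, t, k * t + e)))"
  unfolding affine_xy_def affine2_def by fastforce

lemma affine_yz_comp_graph: "affine_yz h \<Longrightarrow> affine2_snd (h \<circ> (\<lambda>(s, t). (s, t, k * t + e)))"
proof -
  assume "affine_yz h"
  then obtain a b c where "\<forall>x y z. h (x, y, z) = a * y + b * z + c"
    unfolding affine_yz_def by blast
  then have "\<forall>s t. (h \<circ> (\<lambda>(s, t). (s, t, k * t + e))) (s, t) = (a + b * k) * t + (b * e + c)"
    by (simp add: algebra_simps)
  then show ?thesis
    unfolding affine2_snd_def by blast
qed

lemma affine_xy_comp_slice: "affine_xy h \<Longrightarrow> affine2_snd (h \<circ> (\<lambda>(s, t). (t, e, s)))"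
proof -
  assume "affine_xy h"
  then obtain a b c where "\<forall>x y z. h (x, y, z) = a * x + b * y + c"
    unfolding affine_xy_def by blast
  then have "\<forall>s t. (h \<circ> (\<lambda>(s, t). (t, e, s))) (s, t) = a * t + (b * e + c)"
    by simp
  then show ?thesis
    unfolding affine2_snd_def by blast
qed

lemma affine_yz_comp_slice: "affine_yz h \<Longrightarrow> affine2 (h \<circ> (\<lambda>(s, t). (t, e, s)))"
proof -
  assume "affine_yz h"
  then obtain a b c where "\<forall>x y z. h (x, y, z) = a * y + b * z + c"
    unfolding affine_yz_def by blast
  then have "\<forall>s t. (h \<circ> (\<lambda>(s, t). (t, e, s))) (s, t) = b * s + 0 * t + (a * e + c)"
    by (simp add: algebra_simps)
  then show ?thesis
    unfolding affine2_def by blast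
qed

lemma affine_yz_zero_set:
  assumes "affine_yz g" "\<exists>p. g p \<noteq> 0"
  shows "(\<exists>k e. {p. g p = 0} \<subseteq> range (\<lambda>(s, t). (s, t, k * t + e)))
       \<or> (\<exists>e. {p. g p = 0} \<subseteq> range (\<lambda>(s, t). (t, e, s)))"
proof -
  obtain a b c where g: "\<forall>x y z. g (x, y, z) = a * y + b * z + c"
    using assms(1) unfolding affine_yz_def by blast
  consider "b \<noteq> 0" | "b = 0" "a \<noteq> 0" | "a = 0" "b = 0"
    by blast
  then show ?thesis
  proof cases
    case 1
    have "{p. g p = 0} \<subseteq> range (\<lambda>(s, t). (s, t, (- a / b) * t + (- c / b)))"
    proof
      fix p assume "p \<in> {p. g p = 0}"
      with 1 g show "p \<in> range (\<lambda>(s, t). (s, t, (- a / b) * t + (- c / b)))"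
        by (cases p rule: prod_cases3)
          (auto intro!: range_eqI[of _ _ "(fst p, fst (snd p))"] simp: field_simps)
    qed
    then show ?thesis by blast
  next
    case 2
    have "{p. g p = 0} \<subseteq> range (\<lambda>(s, t). (t, - c / a, s))"
    proof
      fix p assume "p \<in> {p. g p = 0}"
      with 2 g show "p \<in> range (\<lambda>(s, t). (t, - c / a, s))"
        by (cases p rule: prod_cases3)
          (auto intro!: range_eqI[of _ _ "(snd (snd p), fst p)"] simp: field_simps)
    qed
    then show ?thesis by blast
  next
    case 3
    then have "{p. g p = 0} = {}"
      using g assms(2) by force
    then show ?thesis by blast
  qed
qed

lemma bound_swap_le:
  fixes p q :: nat
  assumes "q \<le> p"
  shows "q * (q + 1) + 2 * p * (q + 1) \<le> p * (p + 1) + 2 * q * (p + 1)"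
proof -
  obtain s where "p = q + s"
    using assms le_Suc_ex by blast
  moreover have "s \<le> s * s"
    by (cases s) auto
  ultimately show ?thesis
    by (simp add: algebra_simps trans_le_add1)
qed

lemma card_realized_patterns_affine_yz_zero_set:
  assumes "finite P" "finite Q" "P \<inter> Q = {}" "card Q \<le> card P"
    and "\<forall>i\<in>P. affine_xy (f i)" "\<forall>i\<in>Q. affine_yz (f i)"
    and "affine_yz g" "\<exists>p. g p \<noteq> 0"
  shows "2 * card (realized_patterns {p. g p = 0} (P \<union> Q) f)
           \<le> 2 + card P * (card P + 1) + 2 * card Q * (card P + 1)"
proof -
  have fin: "finite (P \<union> Q)"
    using assms(1,2) by simp
  from affine_yz_zero_set[OF assms(7,8)] show ?thesis
  proof (elim disjE exE)
    fix k e :: real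
    let ?\<psi> = "\<lambda>(s, t :: real). (s, t, k * t + e)"
    assume "{p. g p = 0} \<subseteq> range ?\<psi>"
    then have "card (realized_patterns {p. g p = 0} (P \<union> Q) f)
        \<le> card (realized_patterns UNIV (P \<union> Q) (\<lambda>i. f i \<circ> ?\<psi>))"
      by (rule card_realized_patterns_comp[OF fin])
    moreover have "2 * card (realized_patterns UNIV (P \<union> Q) (\<lambda>i. f i \<circ> ?\<psi>))
        \<le> 2 + card P * (card P + 1) + 2 * card Q * (card P + 1)"
      using assms(1-3,5,6)
      by (intro card_realized_patterns_affine2 ballI affine_xy_comp_graph affine_yz_comp_graph) auto
    ultimately show ?thesis by simp
  next
    fix e :: real
    let ?\<psi> = "\<lambda>(s :: real, t). (t, e, s)"
    assume "{p. g p = 0} \<subseteq> range ?\<psi>"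
    then have "2 * card (realized_patterns {p. g p = 0} (P \<union> Q) f)
        \<le> 2 * card (realized_patterns UNIV (P \<union> Q) (\<lambda>i. f i \<circ> ?\<psi>))"
      using card_realized_patterns_comp[OF fin] by simp
    also have "\<dots> \<le> 2 + card Q * (card Q + 1) + 2 * card P * (card Q + 1)"
    proof -
      have "\<forall>i\<in>Q. affine2 (f i \<circ> ?\<psi>)" "\<forall>i\<in>P. affine2_snd (f i \<circ> ?\<psi>)"
        using assms(5,6) affine_xy_comp_slice affine_yz_comp_slice by blast+
      then show ?thesis
        using card_realized_patterns_affine2[OF assms(2,1)] assms(3) by (simp add: Un_commute Int_commute)
    qed
    also have "\<dots> \<le> 2 + card P * (card P + 1) + 2 * card Q * (card P + 1)"
      using bound_swap_le[OF assms(4)] by simp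
    finally show ?thesis .
  qed
qed

lemma card_realized_patterns_affine_xy:
  assumes "finite P" "\<forall>i\<in>P. affine_xy (f i)"
  shows "2 * card (realized_patterns UNIV P f) \<le> 2 + card P * (card P + 1)"
proof -
  have affine: "\<forall>i\<in>P. affine2 (\<lambda>(x, y). f i (x, y, 0))"
    using assms(2) unfolding affine_xy_def affine2_def by fastforce
  have "card (realized_patterns UNIV P f) \<le> card (realized_patterns UNIV P (\<lambda>i (x, y). f i (x, y, 0)))"
  proof (rule card_realized_patterns_mono[OF assms(1)])
    fix p :: "real \<times> real \<times> real"
    have "f i (fst p, fst (snd p), 0) = f i p" if "i \<in> P" for i
      using assms(2) that unfolding affine_xy_def by (cases p rule: prod_cases3) fastforce
    then show "\<exists>q\<in>UNIV. \<forall>i\<in>P. (case q of (x, y) \<Rightarrow> f i (x, y, 0)) = f i p"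
      by (intro bexI[of _ "(fst p, fst (snd p))"]) auto
  qed
  moreover have "2 * card (realized_patterns UNIV P (\<lambda>i (x, y). f i (x, y, 0))) \<le> 2 + card P * (card P + 1)"
    using card_realized_patterns_affine2[of P "{}"] assms(1) affine by simp
  ultimately show ?thesis by simp
qed

(* This is 2 * card \<le> (q + 1) (2 + p (p + 1)) + (p + 1) q (q - 1) for p = card P, q = card Q,
   rearranged to avoid truncated subtraction. *)
lemma card_realized_patterns_affine_xy_yz:
  assumes "finite P" "finite Q" "P \<inter> Q = {}" "card Q \<le> card P"
    and "\<forall>i\<in>P. affine_xy (f i)" "\<forall>i\<in>Q. affine_yz (f i)"
  shows "2 * card (realized_patterns UNIV (P \<union> Q) f) + (card P + 1) * card Q
           \<le> (card Q + 1) * (2 + card P * (card P + 1)) + (card P + 1) * card Q ^ 2"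
  using assms(2-4,6)
proof (induction Q rule: finite_induct)
  case empty
  then show ?case using card_realized_patterns_affine_xy[OF assms(1,5)] by simp
next
  case (insert q Q)
  let ?I = "P \<union> Q"
  have fin: "finite ?I" and "q \<notin> ?I" and "P \<inter> Q = {}" and "card Q \<le> card P"
    using insert.hyps insert.prems assms(1) by auto
  have IH: "2 * card (realized_patterns UNIV ?I f) + (card P + 1) * card Q
      \<le> (card Q + 1) * (2 + card P * (card P + 1)) + (card P + 1) * card Q ^ 2"
    using insert.IH insert.prems \<open>P \<inter> Q = {}\<close> \<open>card Q \<le> card P\<close> by blast
  have "2 * card (realized_patterns UNIV (insert q ?I) f)
      \<le> 2 * card (realized_patterns UNIV ?I f) + (2 + card P * (card P + 1) + 2 * card Q * (card P + 1))"
  proof (cases "\<exists>p. f q p \<noteq> 0")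
    case True
    have "card (realized_patterns UNIV (insert q ?I) f)
        \<le> card (realized_patterns UNIV ?I f) + card (realized_patterns {p. f q p = 0} ?I f)"
      using fin \<open>q \<notin> ?I\<close> assms(5) insert.prems
      by (intro card_realized_patterns_insert interpolating_affine_xy_yz) auto
    moreover have "2 * card (realized_patterns {p. f q p = 0} ?I f)
        \<le> 2 + card P * (card P + 1) + 2 * card Q * (card P + 1)"
      using True assms(1,5) insert.hyps insert.prems \<open>P \<inter> Q = {}\<close> \<open>card Q \<le> card P\<close>
      by (intro card_realized_patterns_affine_yz_zero_set) auto
    ultimately show ?thesis by simp
  next
    case False
    then show ?thesis by (simp add: realized_patterns_insert_zero)
  qed
  moreover have "P \<union> insert q Q = insert q ?I"
    by blast
  ultimately show ?case
    using IH insert.hyps by (simp add: algebra_simps power2_eq_square)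
qed

section \<open>Upper bound for the network\<close>

lemma regions_eq_curry_realized_patterns:
  "{\<sigma> \<in> patterns d. region d w1 w2 b \<sigma> \<noteq> {}}
     = curry ` realized_patterns UNIV ({..<d} \<times> {..<2}) (\<lambda>(k, j). preact w1 w2 b k j)"
  (is "?L = curry ` ?R")
proof
  show "?L \<subseteq> curry ` ?R"
  proof
    fix \<sigma> assume "\<sigma> \<in> ?L"
    then obtain x where x: "\<forall>k<d. \<forall>j<2. of_int (\<sigma> k j) * preact w1 w2 b k j x > 0"
      and "\<sigma> \<in> patterns d"
      by (auto simp: region_def)
    have "case_prod \<sigma> \<in> sign_vectors ({..<d} \<times> {..<2})"
      using \<open>\<sigma> \<in> patterns d\<close> by (auto simp: patterns_def sign_vectors_def)
    moreover have "\<forall>i\<in>{..<d} \<times> {..<2}. of_int (case_prod \<sigma> i) * (\<lambda>(k, j). preact w1 w2 b k j) i x > 0"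
      using x by auto
    ultimately have "case_prod \<sigma> \<in> ?R"
      unfolding realized_patterns_def by blast
    then show "\<sigma> \<in> curry ` ?R"
      by (metis curry_case_prod image_eqI)
  qed
  show "curry ` ?R \<subseteq> ?L"
  proof
    fix \<sigma> assume "\<sigma> \<in> curry ` ?R"
    then obtain \<tau> x where "\<sigma> = curry \<tau>" "\<tau> \<in> sign_vectors ({..<d} \<times> {..<2})"
      and x: "\<forall>i\<in>{..<d} \<times> {..<2}. of_int (\<tau> i) * (\<lambda>(k, j). preact w1 w2 b k j) i x > 0"
      by (auto simp: realized_patterns_def)
    then have "\<sigma> \<in> patterns d"
      by (auto simp: patterns_def sign_vectors_def)
    moreover have "x \<in> region d w1 w2 b \<sigma>"
      using x \<open>\<sigma> = curry \<tau>\<close> by (auto simp: region_def)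
    ultimately show "\<sigma> \<in> ?L"
      by blast
  qed
qed

lemma num_regions_eq_card_realized_patterns:
  "num_regions d w1 w2 b
     = card (realized_patterns UNIV ({..<d} \<times> {..<2}) (\<lambda>(k, j). preact w1 w2 b k j))"
proof -
  have "inj_on curry A" for A :: "(nat \<times> nat \<Rightarrow> int) set"
    by (rule inj_onI) (metis case_prod_curry)
  then show ?thesis
    unfolding num_regions_def regions_eq_curry_realized_patterns by (rule card_image)
qed

lemma num_regions_le: "num_regions d w1 w2 b \<le> d ^ 3 + d ^ 2 + d + 1"
proof -
  let ?f = "\<lambda>(k, j). preact w1 w2 b k j"
  let ?P = "{..<d} \<times> {0::nat}" and ?Q = "{..<d} \<times> {1::nat}"
  have "\<forall>i\<in>?P. affine_xy (?f i)"
    unfolding affine_xy_def by fastforce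
  moreover have "\<forall>i\<in>?Q. affine_yz (?f i)"
    unfolding affine_yz_def by fastforce
  moreover have "card ?P = d" "card ?Q = d" "?P \<inter> ?Q = {}"
    by (auto simp: card_cartesian_product)
  moreover have "?P \<union> ?Q = {..<d} \<times> {..<2}"
    by auto
  ultimately have "2 * card (realized_patterns UNIV ({..<d} \<times> {..<2}) ?f) + (d + 1) * d
      \<le> (d + 1) * (2 + d * (d + 1)) + (d + 1) * d ^ 2"
    using card_realized_patterns_affine_xy_yz[of ?P ?Q ?f] by simp
  moreover have "(d + 1) * (2 + d * (d + 1)) + (d + 1) * d ^ 2 = 2 * (d ^ 3 + d ^ 2 + d + 1) + (d + 1) * d"
    by (simp add: algebra_simps power2_eq_square power3_eq_cube)
  ultimately have "2 * card (realized_patterns UNIV ({..<d} \<times> {..<2}) ?f) \<le> 2 * (d ^ 3 + d ^ 2 + d + 1)"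
    by (metis add_le_cancel_right)
  then show ?thesis
    unfolding num_regions_eq_card_realized_patterns by simp
qed

section \<open>A network attaining the bound\<close>

definition witness_preact :: "nat \<Rightarrow> real \<Rightarrow> real \<Rightarrow> real" where
  "witness_preact k u v = u + 2 * (real k + 1) * v - (real k + 1) ^ 2"

definition active_exactly :: "nat \<Rightarrow> nat set \<Rightarrow> real \<Rightarrow> real \<Rightarrow> bool" where
  "active_exactly d A u v \<longleftrightarrow>
     (\<forall>k<d. (k \<in> A \<longrightarrow> witness_preact k u v > 0) \<and> (k \<notin> A \<longrightarrow> witness_preact k u v < 0))"

lemma active_exactly_factored:
  assumes "l \<le> r" "u = - (l * r)" "v = (l + r) / 2"
    and "\<And>k. k < d \<Longrightarrow> k \<in> A \<Longrightarrow> l < real k + 1 \<and> real k + 1 < r"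
    and "\<And>k. k < d \<Longrightarrow> k \<notin> A \<Longrightarrow> real k + 1 < l \<or> r < real k + 1"
  shows "active_exactly d A u v"
  unfolding active_exactly_def
proof (intro allI impI conjI)
  fix k assume "k < d"
  have factored: "witness_preact k u v = (real k + 1 - l) * (r - (real k + 1))"
    unfolding witness_preact_def assms(2,3) by (simp add: field_simps power2_eq_square)
  show "witness_preact k u v > 0" if "k \<in> A"
    using assms(4)[OF \<open>k < d\<close> that] unfolding factored by simp
  show "witness_preact k u v < 0" if "k \<notin> A"
    using assms(1) assms(5)[OF \<open>k < d\<close> that] unfolding factored by (auto simp: mult_less_0_iff)
qed

lemma active_exactly_empty: "active_exactly d {} (- 1 / 4) (1 / 2)"
  by (rule active_exactly_factored[where l = "1 / 2" and r = "1 / 2"]) auto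

lemma active_exactly_interval:
  assumes "i \<le> j"
  shows "active_exactly d {i..j} (- ((real i + 1 / 2) * (real j + 3 / 2))) ((real i + real j) / 2 + 1)"
proof (rule active_exactly_factored)
  fix k assume "k \<notin> {i..j}"
  then have "real k + 1 \<le> real i \<or> real j + 1 \<le> real k"
    by auto
  then show "real k + 1 < real i + 1 / 2 \<or> real j + 3 / 2 < real k + 1"
    by linarith
qed (use assms in auto)

lemma active_exactly_prefix_right:
  assumes "v > 0"
  shows "\<exists>w. active_exactly d {..<m} v w"
proof -
  define hi where "hi = real m + 1 / 2"
  define lo where "lo = - v / hi"
  have "hi > 0" "lo < 0"
    using assms by (auto simp: lo_def hi_def)
  have "active_exactly d {..<m} v ((lo + hi) / 2)"
    by (rule active_exactly_factored[where l = lo and r = hi])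
      (use \<open>hi > 0\<close> \<open>lo < 0\<close> in \<open>auto simp: lo_def hi_def\<close>)
  then show ?thesis by blast
qed

lemma active_exactly_prefix_left:
  assumes "v < 0"
  shows "\<exists>u. active_exactly d {..<p} u v"
proof -
  define hi where "hi = real p + 1 / 2"
  define lo where "lo = 2 * v - hi"
  have "hi > 0" "lo < 0"
    using assms by (auto simp: lo_def hi_def)
  have "active_exactly d {..<p} (- (lo * hi)) v"
    by (rule active_exactly_factored[where l = lo and r = hi])
      (use \<open>hi > 0\<close> \<open>lo < 0\<close> in \<open>auto simp: lo_def hi_def\<close>)
  then show ?thesis by blast
qed

definition pattern_of :: "nat \<Rightarrow> nat set \<Rightarrow> nat set \<Rightarrow> nat \<times> nat \<Rightarrow> int" where
  "pattern_of d A B =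
     (\<lambda>(k, j). if k < d \<and> j < 2 then (if k \<in> (if j = 0 then A else B) then 1 else -1) else 0)"

lemma pattern_of_realized:
  assumes "active_exactly d A u v" "active_exactly d B v w"
  shows "pattern_of d A B \<in> realized_patterns UNIV ({..<d} \<times> {..<2})
           (\<lambda>(k, j). preact (\<lambda>_. 1) (\<lambda>k. 2 * (real k + 1)) (\<lambda>k. - ((real k + 1) ^ 2)) k j)"
proof -
  have "pattern_of d A B \<in> sign_vectors ({..<d} \<times> {..<2})"
    by (auto simp: pattern_of_def sign_vectors_def)
  moreover have "of_int (pattern_of d A B i)
      * (\<lambda>(k, j). preact (\<lambda>_. 1) (\<lambda>k. 2 * (real k + 1)) (\<lambda>k. - ((real k + 1) ^ 2)) k j) i (u, v, w) > 0"
    if neuron: "i \<in> {..<d} \<times> {..<2}" for i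
  proof -
    obtain k j where i: "i = (k, j)" "k < d" "j < 2"
      using neuron by (cases i) auto
    then consider "j = 0" | "j = 1"
      by linarith
    then show ?thesis
      using assms i unfolding active_exactly_def
      by cases (auto simp: pattern_of_def witness_preact_def)
  qed
  ultimately show ?thesis
    unfolding realized_patterns_def by blast
qed

lemma inj_on_pattern_of: "inj_on (\<lambda>(A, B). pattern_of d A B) (Pow {..<d} \<times> Pow {..<d})"
proof (rule inj_onI, clarify)
  fix A B A' B' assume "A \<subseteq> {..<d}" "B \<subseteq> {..<d}" "A' \<subseteq> {..<d}" "B' \<subseteq> {..<d}"
    and eq: "pattern_of d A B = pattern_of d A' B'"
  have "k \<in> A \<longleftrightarrow> k \<in> A'" "k \<in> B \<longleftrightarrow> k \<in> B'" if "k < d" for k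
    using fun_cong[OF eq, of "(k, 0)"] fun_cong[OF eq, of "(k, 1)"] that
    by (auto simp: pattern_of_def split: if_splits)
  then show "A = A' \<and> B = B'"
    using \<open>A \<subseteq> _\<close> \<open>B \<subseteq> _\<close> \<open>A' \<subseteq> _\<close> \<open>B' \<subseteq> _\<close> by blast
qed

definition index_pairs :: "nat \<Rightarrow> nat \<Rightarrow> (nat \<times> nat) set" where
  "index_pairs lo d = {(i, j). lo \<le> i \<and> i \<le> j \<and> j < d}"

definition intervals :: "nat \<Rightarrow> nat \<Rightarrow> nat set set" where
  "intervals lo d = (\<lambda>(i, j). {i..j}) ` index_pairs lo d"

lemma finite_index_pairs: "finite (index_pairs lo d)"
  by (rule finite_subset[of _ "{..<d} \<times> {..<d}"]) (auto simp: index_pairs_def)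

lemma card_index_pairs_Suc: "card (index_pairs lo (Suc d)) = card (index_pairs lo d) + (Suc d - lo)"
proof -
  have "index_pairs lo (Suc d) = index_pairs lo d \<union> (\<lambda>i. (i, d)) ` {lo..d}"
    "index_pairs lo d \<inter> (\<lambda>i. (i, d)) ` {lo..d} = {}"
    by (auto simp: index_pairs_def)
  then show ?thesis
    by (simp add: card_Un_disjoint finite_index_pairs card_image inj_on_def)
qed

lemma card_index_pairs_0_1: "card (index_pairs 0 d) + card (index_pairs 1 d) = d ^ 2"
proof (induction d)
  case 0
  then show ?case by (simp add: index_pairs_def)
next
  case (Suc d)
  then show ?case by (simp add: card_index_pairs_Suc power2_eq_square)
qed

lemma card_intervals: "card (intervals lo d) = card (index_pairs lo d)"
  unfolding intervals_def by (rule card_image) (auto simp: inj_on_def index_pairs_def)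

(* The active sets at the two filter positions share x\<^sub>2: for x\<^sub>2 > 0 the second one is a prefix,
   for x\<^sub>2 < 0 the first one is. Intervals starting at 0 are prefixes, so the second summand only
   uses intervals starting at 1, which keeps the two summands disjoint. *)
definition realizable_pairs :: "nat \<Rightarrow> (nat set \<times> nat set) set" where
  "realizable_pairs d = insert {} (intervals 0 d) \<times> lessThan ` {..d} \<union> lessThan ` {..d} \<times> intervals 1 d"

lemma card_realizable_pairs: "card (realizable_pairs d) = d ^ 3 + d ^ 2 + d + 1"
proof -
  have "{} \<notin> intervals 0 d"
    by (auto simp: intervals_def index_pairs_def)
  moreover have "X \<notin> intervals 1 d" if prefix: "X \<in> lessThan ` {..d}" for X
  proof
    assume "X \<in> intervals 1 d"
    then obtain i j where X: "X = {i..j}" "1 \<le> i" "i \<le> j"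
      by (auto simp: intervals_def index_pairs_def)
    obtain m where "X = {..<m}"
      using prefix by blast
    moreover have "i \<in> X"
      using X by simp
    ultimately have "0 \<in> X"
      by simp
    then show False
      using X by simp
  qed
  moreover have "card (lessThan ` {..d}) = d + 1"
    by (subst card_image) (auto simp: inj_on_def)
  moreover have "finite (intervals lo d)" for lo
    by (simp add: intervals_def finite_index_pairs)
  ultimately have "card (realizable_pairs d)
      = (card (intervals 0 d) + 1) * (d + 1) + (d + 1) * card (intervals 1 d)"
    unfolding realizable_pairs_def
    by (subst card_Un_disjoint) (auto simp: card_cartesian_product)
  also have "\<dots> = (d + 1) * (card (index_pairs 0 d) + card (index_pairs 1 d) + 1)"
    by (simp add: card_intervals algebra_simps)
  also have "\<dots> = (d + 1) * (d ^ 2 + 1)"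
    by (simp only: card_index_pairs_0_1)
  finally show ?thesis
    by (simp add: algebra_simps power2_eq_square power3_eq_cube)
qed

lemma realizable_pair_realized:
  assumes "(A, B) \<in> realizable_pairs d"
  shows "pattern_of d A B \<in> realized_patterns UNIV ({..<d} \<times> {..<2})
           (\<lambda>(k, j). preact (\<lambda>_. 1) (\<lambda>k. 2 * (real k + 1)) (\<lambda>k. - ((real k + 1) ^ 2)) k j)"
proof -
  consider (empty_prefix) m where "A = {}" "B = {..<m}"
    | (interval_prefix) i j m where "A = {i..j}" "i \<le> j" "B = {..<m}"
    | (prefix_interval) p i j where "A = {..<p}" "B = {i..j}" "1 \<le> i" "i \<le> j"
    using assms by (auto simp: realizable_pairs_def intervals_def index_pairs_def)
  then show ?thesis
  proof cases
    case empty_prefix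
    obtain w where "active_exactly d B (1 / 2) w"
      using active_exactly_prefix_right[of "1 / 2"] empty_prefix by auto
    then show ?thesis
      using pattern_of_realized[OF active_exactly_empty] empty_prefix by simp
  next
    case interval_prefix
    obtain w where "active_exactly d B ((real i + real j) / 2 + 1) w"
      using active_exactly_prefix_right[of "(real i + real j) / 2 + 1"] interval_prefix
      by (auto simp: add_nonneg_pos)
    then show ?thesis
      using pattern_of_realized[OF active_exactly_interval] interval_prefix by simp
  next
    case prefix_interval
    let ?v = "- ((real i + 1 / 2) * (real j + 3 / 2))"
    have "?v < 0"
      by (simp add: add_pos_pos)
    then obtain u where "active_exactly d A u ?v"
      using active_exactly_prefix_left prefix_interval by blast
    then show ?thesis
      using pattern_of_realized[OF _ active_exactly_interval] prefix_interval by simp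
  qed
qed

lemma num_regions_witness_ge:
  "d ^ 3 + d ^ 2 + d + 1 \<le> num_regions d (\<lambda>_. 1) (\<lambda>k. 2 * (real k + 1)) (\<lambda>k. - ((real k + 1) ^ 2))"
proof -
  let ?R = "realized_patterns UNIV ({..<d} \<times> {..<2})
    (\<lambda>(k, j). preact (\<lambda>_. 1) (\<lambda>k. 2 * (real k + 1)) (\<lambda>k. - ((real k + 1) ^ 2)) k j)"
  have "realizable_pairs d \<subseteq> Pow {..<d} \<times> Pow {..<d}"
    by (auto simp: realizable_pairs_def intervals_def index_pairs_def)
  then have "inj_on (\<lambda>(A, B). pattern_of d A B) (realizable_pairs d)"
    by (rule inj_on_subset[OF inj_on_pattern_of])
  then have "d ^ 3 + d ^ 2 + d + 1 = card ((\<lambda>(A, B). pattern_of d A B) ` realizable_pairs d)"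
    by (simp add: card_image card_realizable_pairs)
  also have "\<dots> \<le> card ?R"
    using realizable_pair_realized by (intro card_mono finite_realized_patterns) auto
  finally show ?thesis
    unfolding num_regions_eq_card_realized_patterns .
qed

theorem mainTheorem8:
  fixes d :: nat
  assumes "d \<ge> 1"
  shows "is_max_regions d (d ^ 3 + d ^ 2 + d + 1)"
  unfolding is_max_regions_def
proof
  show "\<exists>w1 w2 b. num_regions d w1 w2 b = d ^ 3 + d ^ 2 + d + 1"
    using num_regions_witness_ge num_regions_le by (blast intro: antisym)
  show "\<forall>w1 w2 b. num_regions d w1 w2 b \<le> d ^ 3 + d ^ 2 + d + 1"
    using num_regions_le by blast
qed

end
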